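(* Let $P$ be a non-constant polynomial with integer coefficients and positive leading coefficient. Then there exists a natural number $n$ such that $P(n)$ is not a practical number.
   Context: A positive integer $N$ is called a practical number if every integer in $[1,N]$ can be expressed as a sum of distinct positive divisors of $N$. *)

theory Defs
  imports "HOL-Computational_Algebra.Polynomial"
begin

definition practical :: "int \<Rightarrow> bool" where
  "practical N \<longleftrightarrow> N > 0 \<and>
     (\<forall>m\<in>{1..N}. \<exists>S. S \<subseteq> {d. d > 0 \<and> d dvd N} \<and> \<Sum>S = m)"

end

theory Submission
  imports Defs
begin

text \<open>Fix k with A = P(k) > 0 and put m = A^2 + 1. Every n \<equiv> k (mod m!) satisfies
  P(n) \<equiv> A (mod m!), so every divisor d \<le> m of P(n), which divides m!, also divides A.
  Hence a sum of distinct divisors of P(n) equal to m would be a sum of distinct divisors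
  of A, which is at most A^2 < m. Choosing such an n with P(n) \<ge> m shows that P(n) is
  not practical.\<close>

lemma diff_dvd_poly_diff:
  fixes p :: "'a::comm_ring_1 poly"
  shows "(x - y) dvd (poly p x - poly p y)"
proof (induction p rule: pCons_induct)
  case 0
  then show ?case by simp
next
  case (pCons a p)
  have "poly (pCons a p) x - poly (pCons a p) y = x * (poly p x - poly p y) + (x - y) * poly p y"
    by (simp add: algebra_simps)
  then show ?case using pCons.IH by simp
qed

lemma poly_eventually_greater:
  fixes p :: "int poly"
  assumes "degree p \<ge> 1" "lead_coeff p > 0"
  shows "\<exists>N. \<forall>x\<ge>N. poly p x > B"
  using assms
proof (induction p arbitrary: B rule: pCons_induct)
  case 0
  then show ?case by simp
next
  case (pCons a q)
  have "q \<noteq> 0" using pCons.prems by auto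
  then have lead_q: "lead_coeff q > 0" using pCons.prems by (simp add: lead_coeff_pCons)
  show ?case
  proof (cases "degree q = 0")
    case True
    then obtain c where "q = [:c:]" by (metis degree_eq_zeroE)
    with lead_q have q: "q = [:c:]" "c > 0" by auto
    show ?thesis
    proof (intro exI allI impI)
      fix x assume x: "x \<ge> max 1 (\<bar>B\<bar> + \<bar>a\<bar> + 1)"
      have "x * c \<ge> x" using q(2) x by (smt (verit) mult_le_cancel_left1)
      then show "poly (pCons a q) x > B" using x q by simp
    qed
  next
    case False
    then obtain N where N: "\<forall>x\<ge>N. poly q x > \<bar>a\<bar> + \<bar>B\<bar>"
      using pCons.IH lead_q by auto
    show ?thesis
    proof (intro exI allI impI)
      fix x assume x: "x \<ge> max N 1"
      have q_x: "poly q x > \<bar>a\<bar> + \<bar>B\<bar>" using N x by auto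
      then have "x * poly q x \<ge> poly q x" using x by (smt (verit) mult_le_cancel_right1)
      then show "poly (pCons a q) x > B" using q_x by simp
    qed
  qed
qed

lemma int_dvd_fact:
  fixes d m :: int
  assumes "0 < d" "d \<le> m"
  shows "d dvd fact (nat m)"
proof -
  have "nat d dvd fact (nat m)" using assms by (intro dvd_fact) auto
  then have "int (nat d) dvd int (fact (nat m))" by (simp only: int_dvd_int_iff)
  then show ?thesis using assms(1) by (simp add: of_nat_fact)
qed

lemma not_practical_if_small_divisors_dvd:
  fixes A m N :: int
  assumes "0 < A" "A * A < m" "m \<le> N"
    and small_dvd: "\<And>d. 0 < d \<Longrightarrow> d dvd N \<Longrightarrow> d \<le> m \<Longrightarrow> d dvd A"
  shows "\<not> practical N"
proof
  assume "practical N"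
  moreover have "m \<in> {1..N}" using assms(1-3) by (smt (verit) atLeastAtMost_iff mult_pos_pos)
  ultimately obtain S where S: "S \<subseteq> {d. d > 0 \<and> d dvd N}" "\<Sum>S = m"
    unfolding practical_def by blast
  have "finite S" using S(2) assms(1,2) by (metis mult_pos_pos not_less_iff_gr_or_eq sum.infinite)
  have "S \<subseteq> {1..A}"
  proof
    fix d assume "d \<in> S"
    then have "d \<le> \<Sum>S" using S(1) \<open>finite S\<close> by (intro member_le_sum) auto
    with \<open>d \<in> S\<close> have "0 < d" "d dvd N" "d \<le> m" using S by auto
    then have "d dvd A" by (rule small_dvd)
    then show "d \<in> {1..A}" using \<open>0 < d\<close> \<open>0 < A\<close> by (simp add: zdvd_imp_le)
  qed
  then have "\<Sum>S \<le> \<Sum>{1..A}" by (intro sum_mono2) auto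
  also have "\<dots> \<le> of_nat (card {1..A}) * A" by (intro sum_bounded_above) auto
  also have "\<dots> = A * A" using \<open>0 < A\<close> by simp
  finally show False using S(2) assms(2) by simp
qed

theorem proposition2p1:
  fixes P :: "int poly"
  assumes "degree P \<ge> 1" and "lead_coeff P > 0"
  shows "\<exists>n::nat. \<not> practical (poly P (int n))"
proof -
  obtain N0 where "\<forall>x\<ge>N0. poly P x > 0" using poly_eventually_greater[OF assms] by blast
  then obtain k where "k \<ge> 0" and A_pos: "poly P k > 0" by (metis max.cobounded1 max.cobounded2)
  define A where "A = poly P k"
  define m where "m = A * A + 1"
  obtain N where N: "\<forall>x\<ge>N. poly P x > m" using poly_eventually_greater[OF assms] by blast
  define n where "n = k + fact (nat m) * (\<bar>N\<bar> + 1)"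
  have "fact (nat m) * (\<bar>N\<bar> + 1) \<ge> \<bar>N\<bar> + 1"
    using mult_right_mono[of 1 "fact (nat m)" "\<bar>N\<bar> + 1"] by simp
  then have "n \<ge> 0" "n \<ge> N" using \<open>k \<ge> 0\<close> unfolding n_def by linarith+
  have "fact (nat m) dvd poly P n - A"
    using diff_dvd_poly_diff[of n k P] unfolding n_def A_def by (simp add: dvd_mult_left)
  have "\<not> practical (poly P n)"
  proof (rule not_practical_if_small_divisors_dvd)
    show "0 < A" "A * A < m" using A_pos unfolding A_def m_def by auto
    show "m \<le> poly P n" using N \<open>n \<ge> N\<close> by fastforce
  next
    fix d assume "0 < d" "d dvd poly P n" "d \<le> m"
    then have "d dvd poly P n - A"
      using int_dvd_fact dvd_trans \<open>fact (nat m) dvd poly P n - A\<close> by blast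
    with \<open>d dvd poly P n\<close> have "d dvd poly P n - (poly P n - A)" by (rule dvd_diff)
    then show "d dvd A" by simp
  qed
  then show ?thesis using \<open>n \<ge> 0\<close> by (intro exI[of _ "nat n"]) simp
qed

end
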